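(* Under the standing assumptions below, let $\eta>0$. If $x$ is sufficiently large (in terms of $\epsilon$ and $\eta$), then for every residue class $a\bmod 36$ with $2a\not\in Q$ (modulo $36$) we have $\delta_a\leq 0.04+\eta$.
   Context: Standing assumptions and notation: $\epsilon>0$ is fixed, $\delta_0=\frac14-\frac{2}{\pi^2}$, and $A\subseteq[1,x]\cap\mathbb{N}$ is a set with $|A|>(\delta_0+\epsilon)x$ such that $A+A=\{a+b:a,b\in A\}$ contains no squarefree integer, and $A$ is not a subset of $4\mathbb{N}$, nor of $9\mathbb{N}$, nor of $\{n\in\mathbb{N}:n\equiv 2\pmod 4\}$. For $a\in\{0,\dots,35\}$ put $\delta_a=\frac{36\cdot\#\{n\in A: n\equiv a\pmod{36}\}}{x}$. Let $U$ be the set of residues $a\bmod 36$ with $\delta_a>1-\frac{9}{\pi^2}+\epsilon/100$, let $V$ be the set of residues $a\bmod 36$ with $\delta_a>0$, and let $Q=\{0,4,8,9,12,16,18,20,24,27,28,32\}$ (the residue classes mod $36$ containing no squarefree integers). *)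

theory Defs
  imports Complex_Main "HOL-Computational_Algebra.Squarefree"
begin

definition delta0 :: real where
  "delta0 = 1/4 - 2 / pi^2"

text \<open>Residue classes mod 36 containing no squarefree integers.\<close>
definition Qres :: "nat set" where
  "Qres = {0,4,8,9,12,16,18,20,24,27,28,32}"

definition standing :: "real \<Rightarrow> real \<Rightarrow> nat set \<Rightarrow> bool" where
  "standing \<epsilon> x A \<longleftrightarrow>
     A \<subseteq> {n. 1 \<le> n \<and> real n \<le> x} \<and>
     real (card A) > (delta0 + \<epsilon>) * x \<and>
     (\<forall>a\<in>A. \<forall>b\<in>A. \<not> squarefree (a + b)) \<and>
     \<not> (\<forall>n\<in>A. 4 dvd n) \<and>
     \<not> (\<forall>n\<in>A. 9 dvd n) \<and>
     \<not> (\<forall>n\<in>A. n mod 4 = 2)"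

definition delta_res :: "nat set \<Rightarrow> real \<Rightarrow> nat \<Rightarrow> real" where
  "delta_res A x a = 36 * real (card {n\<in>A. n mod 36 = a}) / x"

end

theory Submission
  imports Defs "HOL-Number_Theory.Cong"
begin

(*
  Let B be the part of A in a residue class a mod 36 with 2a mod 36 not in Q.  For n, m in B
  the sum n + m lies in the class 2a, hence is divisible neither by 4 nor by 9; being
  non-squarefree it is therefore divisible by p^2 for a prime p >= 5.  Taking m = n shows that
  every element of B is divisible by such a square.

  Case 1: a single prime p >= 5 has p^2 dividing all of B.  Then B lies in one class modulo
  36 p^2, so |B| <= x/900 + 1.
  Case 2: for every prime p >= 5 some element m_p of B is not divisible by p^2.  Each n in B
  has p^2 | n and q^2 | n + m_p for primes 5 <= q != p, both at most sqrt(2x).  Counting the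
  class of n modulo 36 p^2 q^2 when p <= K, and modulo 36 p^2 when p > K, and using
  sum_{p >= 5 prime} 1/p^2 <= 1/8 and sum_{d > K} 1/d^2 <= 1/K, gives
  |B| <= x/2304 + x/(36K) + (K+2)(sqrt(2x)+1).
  Both bounds are at most (0.04 + eta) x / 36 once K >= 2/eta and x is large.
*)

section \<open>Arithmetic of residues modulo 36\<close>

lemma Qres_multiples_of_4_or_9:
  fixes c :: nat
  assumes "c < 36" and "4 dvd c \<or> 9 dvd c"
  shows "c \<in> Qres"
proof -
  have "\<forall>c<36::nat. 4 dvd c \<or> 9 dvd c \<longrightarrow> c \<in> Qres"
    unfolding Qres_def by code_simp
  with assms show ?thesis by blast
qed

lemma prime_ge_5:
  fixes p :: nat
  assumes "prime p" and "p \<noteq> 2" and "p \<noteq> 3"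
  shows "5 \<le> p"
  using assms prime_ge_2_nat[of p] prime_odd_nat[of p] by (cases "p = 4") auto

text \<open>36 = 2^2 3^2, so primes at least 5 are coprime to it; this lets congruences modulo
  36 and modulo prime squares be combined.\<close>

lemma coprime_36_large_prime:
  fixes p :: nat
  assumes "prime p" and "5 \<le> p"
  shows "coprime 36 p"
proof -
  have "\<not> p dvd 36"
  proof
    assume "p dvd 36"
    then have "p dvd 2^2 * 3^2" by simp
    then have "p dvd 2 \<or> p dvd 3"
      using assms(1) prime_dvd_mult_iff prime_dvd_power by blast
    then have "p \<le> 3" by (auto dest: dvd_imp_le)
    with assms(2) show False by simp
  qed
  then show ?thesis using assms(1) prime_imp_coprime coprime_commute by blast
qed

text \<open>A non-squarefree sum of two elements of a class a with 2a outside Q is divisible by the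
  square of a prime at least 5: the squares 4 and 9 are excluded by the residue of the sum.\<close>

lemma class_sum_large_prime_square:
  fixes n m a :: nat
  assumes "n mod 36 = a" and "m mod 36 = a" and "(2 * a) mod 36 \<notin> Qres"
    and "n + m \<noteq> 0" and "\<not> squarefree (n + m)"
  shows "\<exists>p. prime p \<and> 5 \<le> p \<and> p^2 dvd n + m"
proof -
  obtain p where p: "prime p" "p^2 dvd n + m"
    using assms(4,5) squarefree_factorial_semiring[of "n + m"] by auto
  have sum_class: "(n + m) mod 36 = (2 * a) mod 36"
    using assms(1,2) by (metis mod_add_eq mult_2)
  have "\<not> (4 dvd n + m \<or> 9 dvd n + m)"
  proof
    assume "4 dvd n + m \<or> 9 dvd n + m"
    then have "4 dvd (2 * a) mod 36 \<or> 9 dvd (2 * a) mod 36"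
      using sum_class dvd_mod_iff[of 4 36 "n + m"] dvd_mod_iff[of 9 36 "n + m"] by auto
    then show False
      using Qres_multiples_of_4_or_9[of "(2 * a) mod 36"] assms(3) by simp
  qed
  then have "p \<noteq> 2" and "p \<noteq> 3" using p(2) by auto
  with p show ?thesis using prime_ge_5 by blast
qed

lemma prime_square_dvd_double:
  fixes p n :: nat
  assumes "prime p" and "p \<noteq> 2" and "p^2 dvd 2 * n"
  shows "p^2 dvd n"
proof -
  have "coprime (p^2) 2" using assms(1,2) primes_coprime[of p 2] by auto
  then show ?thesis using assms(3) coprime_dvd_mult_right_iff by blast
qed

lemma cong_of_dvd_shift:
  fixes u v m d :: nat
  assumes "d dvd u + m" and "d dvd v + m"
  shows "[u = v] (mod d)"
proof -
  have "[u + m = v + m] (mod d)" using assms by (simp add: cong_def dvd_eq_mod_eq_0)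
  then show ?thesis by (simp add: cong_add_rcancel_nat)
qed

section \<open>Sums of inverse squares\<close>

lemma sum_le_telescoping:
  fixes f u :: "nat \<Rightarrow> real" and J :: "nat set"
  assumes "finite J" and "J \<subseteq> {K<..}"
    and step: "\<And>k. K < k \<Longrightarrow> 0 \<le> f k \<and> f k \<le> u (k - 1) - u k"
    and "\<And>k. 0 \<le> u k"
  shows "sum f J \<le> u K"
proof -
  obtain M where M: "\<forall>k\<in>J. k \<le> M" using assms(1) finite_nat_set_iff_bounded_le by blast
  define N where "N = max K M"
  have J: "J \<subseteq> {Suc K..N}"
    using assms(2) M by (auto simp: N_def subset_iff Suc_le_eq le_max_iff_disj)
  have "sum f J \<le> sum f {Suc K..N}"
    by (rule sum_mono2) (use J step in auto)
  also have "\<dots> \<le> (\<Sum>k\<in>{Suc K..N}. u (k - 1) - u k)"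
    by (rule sum_mono) (use step in auto)
  also have "\<dots> = u K - u N"
    using sum_telescope''[of K N u] by (simp add: N_def sum_subtractf)
  also have "\<dots> \<le> u K" using assms(4) by simp
  finally show ?thesis .
qed

text \<open>Tail bound: telescoping with 1/d^2 \<le> 1/(d-1) - 1/d.\<close>

lemma sum_inverse_squares_tail:
  fixes I :: "nat set" and K :: nat
  assumes "finite I" and "I \<subseteq> {K<..}" and "1 \<le> K"
  shows "(\<Sum>d\<in>I. 1 / (real d)^2) \<le> 1 / real K"
proof (rule sum_le_telescoping[OF assms(1,2), where u = "\<lambda>d. 1 / real d"])
  fix k :: nat
  assume "K < k"
  then have k: "real k \<ge> 2" using assms(3) by simp
  have "1 / real (k - 1) - 1 / real k = 1 / (real k * (real k - 1))"
    using k by (simp add: of_nat_diff field_simps)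
  moreover have "1 / (real k)^2 \<le> 1 / (real k * (real k - 1))"
    using k by (intro frac_le) (auto simp: power2_eq_square)
  ultimately show "0 \<le> 1 / (real k)^2 \<and> 1 / (real k)^2 \<le> 1 / real (k - 1) - 1 / real k"
    by simp
qed simp

text \<open>Since primes at least 5 are odd, writing p = 2k + 1 with k \<ge> 2 and telescoping
  1/(2k+1)^2 \<le> 1/(4k) - 1/(4(k+1)) gives the bound 1/8.\<close>

lemma sum_inverse_squares_large_primes:
  fixes I :: "nat set"
  assumes "finite I" and "I \<subseteq> {p. prime p \<and> 5 \<le> p}"
  shows "(\<Sum>p\<in>I. 1 / (real p)^2) \<le> 1 / 8"
proof -
  have odd: "2 * (p div 2) + 1 = p" if "p \<in> I" for p
    using that assms(2) prime_odd_nat[of p] odd_two_times_div_two_succ[of p] by auto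
  have inj: "inj_on (\<lambda>p. p div 2) I"
    by (rule inj_onI) (metis odd)
  have "(\<Sum>p\<in>I. 1 / (real p)^2) = (\<Sum>p\<in>I. 1 / (2 * real (p div 2) + 1)^2)"
  proof (rule sum.cong)
    fix p assume "p \<in> I"
    then have "real p = 2 * real (p div 2) + 1" using odd[of p] by linarith
    then show "1 / (real p)^2 = 1 / (2 * real (p div 2) + 1)^2" by simp
  qed simp
  also have "\<dots> = (\<Sum>k\<in>(\<lambda>p. p div 2) ` I. 1 / (2 * real k + 1)^2)"
    by (simp add: sum.reindex[OF inj])
  also have "\<dots> \<le> 1 / (4 * (real 1 + 1))"
  proof (rule sum_le_telescoping[where u = "\<lambda>k. 1 / (4 * (real k + 1))"])
    show "finite ((\<lambda>p. p div 2) ` I)" using assms(1) by simp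
    show "(\<lambda>p. p div 2) ` I \<subseteq> {1<..}" using assms(2) by auto
  next
    fix k :: nat
    assume "1 < k"
    then have k: "real k \<ge> 2" by simp
    have "1 / (4 * (real (k - 1) + 1)) - 1 / (4 * (real k + 1)) = 1 / (4 * real k * (real k + 1))"
      using k by (simp add: of_nat_diff field_simps)
    moreover have "1 / (2 * real k + 1)^2 \<le> 1 / (4 * real k * (real k + 1))"
    proof (rule frac_le)
      show "0 < 4 * real k * (real k + 1)" using k by simp
      show "4 * real k * (real k + 1) \<le> (2 * real k + 1)^2"
        by (simp add: power2_eq_square algebra_simps)
    qed simp_all
    ultimately show "0 \<le> 1 / (2 * real k + 1)^2 \<and>
        1 / (2 * real k + 1)^2 \<le> 1 / (4 * (real (k - 1) + 1)) - 1 / (4 * (real k + 1))"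
      by simp
  qed simp
  finally show ?thesis by simp
qed

lemma sum_bounded_by_inverse_squares:
  fixes I :: "nat set" and S :: "nat \<Rightarrow> real" and c e :: real
  assumes "finite I" and "c \<ge> 0"
    and "\<And>p. p \<in> I \<Longrightarrow> S p \<le> c / (real p)^2 + e"
  shows "(\<Sum>p\<in>I. S p) \<le> c * (\<Sum>p\<in>I. 1 / (real p)^2) + e * real (card I)"
proof -
  have "(\<Sum>p\<in>I. S p) \<le> (\<Sum>p\<in>I. c / (real p)^2 + e)"
    using assms(3) by (rule sum_mono)
  also have "\<dots> = c * (\<Sum>p\<in>I. 1 / (real p)^2) + e * real (card I)"
    by (simp add: sum.distrib sum_distrib_left)
  finally show ?thesis .
qed

section \<open>Counting a residue class below x\<close>

lemma card_congruent_le: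
  fixes S :: "nat set" and M :: nat and x :: real
  assumes "M > 0" and "x \<ge> 0" and "\<forall>n\<in>S. real n \<le> x"
    and "\<forall>u\<in>S. \<forall>v\<in>S. [u = v] (mod M)"
  shows "real (card S) \<le> x / M + 1"
proof -
  have inj: "inj_on (\<lambda>n. n div M) S"
  proof (rule inj_onI)
    fix u v assume uv: "u \<in> S" "v \<in> S" "u div M = v div M"
    then have "u mod M = v mod M" using assms(4) unfolding cong_def by blast
    then show "u = v" using uv(3) by (metis div_mult_mod_eq)
  qed
  have "(\<lambda>n. n div M) ` S \<subseteq> {..nat \<lfloor>x / M\<rfloor>}"
  proof
    fix k assume "k \<in> (\<lambda>n. n div M) ` S"
    then obtain n where n: "n \<in> S" "k = n div M" by auto
    have "real (n div M) \<le> real n / M" by (rule of_nat_div_le_of_nat)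
    also have "\<dots> \<le> x / M" using assms(3) n(1) by (simp add: divide_right_mono)
    finally show "k \<in> {..nat \<lfloor>x / M\<rfloor>}" using n(2) by (simp add: le_nat_floor)
  qed
  then have "card ((\<lambda>n. n div M) ` S) \<le> card {..nat \<lfloor>x / M\<rfloor>}"
    by (intro card_mono) auto
  then have "card S \<le> nat \<lfloor>x / M\<rfloor> + 1" using card_image[OF inj] by simp
  moreover have "real (nat \<lfloor>x / M\<rfloor>) \<le> x / M" using assms(2) by simp
  ultimately show ?thesis by linarith
qed

lemma card_class_congruent_le:
  fixes S :: "nat set" and d a :: nat and x :: real
  assumes "coprime 36 d" and "d > 0" and "x \<ge> 0"
    and "\<forall>n\<in>S. real n \<le> x \<and> n mod 36 = a" and "\<forall>u\<in>S. \<forall>v\<in>S. [u = v] (mod d)"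
  shows "real (card S) \<le> x / 36 / real d + 1"
proof -
  have "[u = v] (mod 36 * d)" if "u \<in> S" and "v \<in> S" for u v
  proof (rule coprime_cong_mult_nat)
    show "[u = v] (mod 36)" using assms(4) that by (simp add: cong_def)
    show "[u = v] (mod d)" using assms(5) that by blast
  qed (rule assms(1))
  then have "real (card S) \<le> x / real (36 * d) + 1"
    using assms(2-4) by (intro card_congruent_le) auto
  then show ?thesis by (simp add: divide_divide_eq_left)
qed

text \<open>The multiples of p^2 in a class mod 36 below x: one class modulo 36 p^2.\<close>

lemma card_prime_square_class:
  fixes B :: "nat set" and p a :: nat and x :: real
  assumes "prime p" and "5 \<le> p" and "x \<ge> 0" and "\<forall>n\<in>B. real n \<le> x \<and> n mod 36 = a"
  shows "real (card {n\<in>B. p^2 dvd n}) \<le> x / 36 / (real p)^2 + 1"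
proof -
  have "real (card {n\<in>B. p^2 dvd n}) \<le> x / 36 / real (p^2) + 1"
  proof (rule card_class_congruent_le)
    show "coprime 36 (p^2)" using coprime_36_large_prime[OF assms(1,2)] by simp
    show "p^2 > 0" using assms(2) by simp
    show "\<forall>u\<in>{n\<in>B. p^2 dvd n}. \<forall>v\<in>{n\<in>B. p^2 dvd n}. [u = v] (mod p^2)"
      using cong_of_dvd_shift[of "p^2" _ 0] by simp
  qed (use assms(3,4) in auto)
  then show ?thesis by simp
qed

text \<open>The n in a class mod 36 below x with p^2 | n and q^2 | n + m: one class modulo
  36 p^2 q^2.\<close>

lemma card_two_prime_squares_class:
  fixes B :: "nat set" and p q m a :: nat and x :: real
  assumes "prime p" and "5 \<le> p" and "prime q" and "5 \<le> q" and "p \<noteq> q" and "x \<ge> 0"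
    and "\<forall>n\<in>B. real n \<le> x \<and> n mod 36 = a"
  shows "real (card {n\<in>B. p^2 dvd n \<and> q^2 dvd n + m})
           \<le> x / 36 / (real p)^2 / (real q)^2 + 1"
proof -
  let ?S = "{n\<in>B. p^2 dvd n \<and> q^2 dvd n + m}"
  have "real (card ?S) \<le> x / 36 / real (p^2 * q^2) + 1"
  proof (rule card_class_congruent_le)
    show "coprime 36 (p^2 * q^2)"
      using coprime_36_large_prime[OF assms(1,2)] coprime_36_large_prime[OF assms(3,4)] by simp
    show "p^2 * q^2 > 0" using assms(2,4) by simp
    have coprime_squares: "coprime (p^2) (q^2)" using assms(1,3,5) primes_coprime by simp
    show "\<forall>u\<in>?S. \<forall>v\<in>?S. [u = v] (mod p^2 * q^2)"
    proof (intro ballI)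
      fix u v assume "u \<in> ?S" and "v \<in> ?S"
      then have "[u = v] (mod p^2)" and "[u = v] (mod q^2)"
        using cong_of_dvd_shift[of "p^2" u 0 v] cong_of_dvd_shift[of "q^2" u m v] by simp_all
      then show "[u = v] (mod p^2 * q^2)" using coprime_squares by (rule coprime_cong_mult_nat)
    qed
  qed (use assms(6,7) in auto)
  then show ?thesis by (simp add: divide_divide_eq_left)
qed

lemma square_divisor_le_sqrt:
  fixes d n :: nat and y :: real
  assumes "d^2 dvd n" and "0 < n" and "real n \<le> y"
  shows "d \<le> nat \<lfloor>sqrt y\<rfloor>"
proof -
  have "(real d)^2 \<le> real n" using dvd_imp_le[OF assms(1,2)] by (metis of_nat_le_iff of_nat_power)
  then have "(real d)^2 \<le> y" using assms(3) by linarith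
  then show ?thesis by (intro le_nat_floor real_le_rsqrt)
qed

section \<open>The covering argument\<close>

definition large_prime_square_sums :: "nat set \<Rightarrow> bool" where
  "large_prime_square_sums B \<longleftrightarrow> (\<forall>n\<in>B. \<forall>m\<in>B. \<exists>p. prime p \<and> 5 \<le> p \<and> p^2 dvd n + m)"

lemma standing_class_large_prime_square_sums:
  assumes "standing \<epsilon> x A" and "(2 * a) mod 36 \<notin> Qres"
  shows "large_prime_square_sums {n\<in>A. n mod 36 = a}"
  unfolding large_prime_square_sums_def
proof (intro ballI)
  fix n m assume "n \<in> {n\<in>A. n mod 36 = a}" "m \<in> {n\<in>A. n mod 36 = a}"
  moreover have "\<forall>u\<in>A. 1 \<le> u" and "\<forall>u\<in>A. \<forall>v\<in>A. \<not> squarefree (u + v)"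
    using assms(1) by (auto simp: standing_def)
  ultimately show "\<exists>p. prime p \<and> 5 \<le> p \<and> p^2 dvd n + m"
    using class_sum_large_prime_square[of n a m] assms(2) by auto
qed

definition prime_square_cover :: "nat \<Rightarrow> (nat \<Rightarrow> nat) \<Rightarrow> nat \<Rightarrow> bool" where
  "prime_square_cover L mp n \<longleftrightarrow> (\<exists>p. prime p \<and> 5 \<le> p \<and> p \<le> L \<and> p^2 dvd n \<and>
     (\<exists>q. prime q \<and> 5 \<le> q \<and> q \<le> L \<and> q \<noteq> p \<and> q^2 dvd n + mp p))"

lemma class_cover_by_prime_squares:
  fixes B :: "nat set" and mp :: "nat \<Rightarrow> nat" and x :: real
  assumes "large_prime_square_sums B" and "\<forall>n\<in>B. 1 \<le> n \<and> real n \<le> x"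
    and witness: "\<And>p. prime p \<Longrightarrow> 5 \<le> p \<Longrightarrow> mp p \<in> B \<and> \<not> p^2 dvd mp p"
    and "n \<in> B"
  shows "prime_square_cover (nat \<lfloor>sqrt (2 * x)\<rfloor>) mp n"
proof -
  have n: "1 \<le> n" "real n \<le> x" using assms(2,4) by auto
  obtain p where p: "prime p" "5 \<le> p" "p^2 dvd n + n"
    using assms(1,4) unfolding large_prime_square_sums_def by blast
  then have pn: "p^2 dvd n" using prime_square_dvd_double[of p n] by (simp add: mult_2)
  have m: "mp p \<in> B" "\<not> p^2 dvd mp p" using witness p by auto
  obtain q where q: "prime q" "5 \<le> q" "q^2 dvd n + mp p"
    using assms(1,4) m(1) unfolding large_prime_square_sums_def by blast
  have "q \<noteq> p" using pn q(3) m(2) dvd_add_right_iff by blast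
  moreover have "real (n + mp p) \<le> 2 * x" using n assms(2) m(1) by auto
  then have "q \<le> nat \<lfloor>sqrt (2 * x)\<rfloor>" using q(3) n(1) square_divisor_le_sqrt by simp
  moreover have "p \<le> nat \<lfloor>sqrt (2 * x)\<rfloor>"
    using pn n square_divisor_le_sqrt[of p n "2 * x"] by simp
  ultimately show ?thesis using p(1,2) pn q unfolding prime_square_cover_def by blast
qed

lemma card_atMost_subset_le:
  fixes S :: "nat set" and L :: nat
  assumes "S \<subseteq> {..L}"
  shows "real (card S) \<le> real L + 1"
proof -
  have "card S \<le> card {..L}" using assms by (intro card_mono) auto
  then show ?thesis by simp
qed

text \<open>Pairs of distinct primes 5 \<le> p \<le> K and 5 \<le> q \<le> L: the classes modulo 36 p^2 q^2 have
  total density at most (1/8)^2 / 36 = 1/2304, plus one element of rounding per pair.\<close>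

lemma sum_two_prime_square_classes:
  fixes B :: "nat set" and K L a :: nat and mp :: "nat \<Rightarrow> nat" and x :: real
  assumes "x \<ge> 0" and B: "\<forall>n\<in>B. real n \<le> x \<and> n mod 36 = a"
  shows "(\<Sum>p\<in>{p. prime p \<and> 5 \<le> p \<and> p \<le> K}. \<Sum>q\<in>{q. prime q \<and> 5 \<le> q \<and> q \<le> L \<and> q \<noteq> p}.
            real (card {n\<in>B. p^2 dvd n \<and> q^2 dvd n + mp p}))
         \<le> x / 2304 + (real K + 1) * (real L + 1)"
proof -
  define I1 where "I1 = {p. prime p \<and> 5 \<le> p \<and> p \<le> K}"
  define I2 where "I2 p = {q. prime q \<and> 5 \<le> q \<and> q \<le> L \<and> q \<noteq> p}" for p
  define C where "C p q = {n\<in>B. p^2 dvd n \<and> q^2 dvd n + mp p}" for p q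
  have I1_sub: "I1 \<subseteq> {..K}" and I2_sub: "I2 p \<subseteq> {..L}" for p
    by (auto simp: I1_def I2_def)
  then have fin: "finite I1" "finite (I2 p)" for p by (auto intro: finite_subset)
  have inner: "(\<Sum>q\<in>I2 p. real (card (C p q))) \<le> x / 36 / (real p)^2 / 8 + (real L + 1)"
    if "p \<in> I1" for p
  proof -
    have "(\<Sum>q\<in>I2 p. real (card (C p q)))
        \<le> x / 36 / (real p)^2 * (\<Sum>q\<in>I2 p. 1 / (real q)^2) + 1 * real (card (I2 p))"
    proof (rule sum_bounded_by_inverse_squares)
      fix q assume "q \<in> I2 p"
      then show "real (card (C p q)) \<le> x / 36 / (real p)^2 / (real q)^2 + 1"
        using that card_two_prime_squares_class[where m = "mp p", OF _ _ _ _ _ assms(1) B]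
        by (auto simp: I1_def I2_def C_def)
    qed (use assms(1) fin in simp_all)
    also have "\<dots> \<le> x / 36 / (real p)^2 * (1 / 8) + (real L + 1)"
      using assms(1) fin sum_inverse_squares_large_primes[of "I2 p"]
        card_atMost_subset_le[OF I2_sub]
      by (intro add_mono mult_left_mono) (auto simp: I2_def)
    finally show ?thesis by simp
  qed
  have "(\<Sum>p\<in>I1. \<Sum>q\<in>I2 p. real (card (C p q)))
      \<le> x / 288 * (\<Sum>p\<in>I1. 1 / (real p)^2) + (real L + 1) * real (card I1)"
    using inner assms(1) fin by (intro sum_bounded_by_inverse_squares) auto
  also have "\<dots> \<le> x / 288 * (1 / 8) + (real L + 1) * (real K + 1)"
    using assms(1) fin sum_inverse_squares_large_primes[of I1] card_atMost_subset_le[OF I1_sub]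
    by (intro add_mono mult_left_mono) (auto simp: I1_def)
  finally show ?thesis by (simp add: I1_def I2_def C_def mult.commute)
qed

lemma sum_prime_square_classes_tail:
  fixes B :: "nat set" and K L a :: nat and x :: real
  assumes "x \<ge> 0" and "1 \<le> K" and B: "\<forall>n\<in>B. real n \<le> x \<and> n mod 36 = a"
  shows "(\<Sum>p\<in>{p. prime p \<and> 5 \<le> p \<and> K < p \<and> p \<le> L}. real (card {n\<in>B. p^2 dvd n}))
         \<le> x / (36 * real K) + (real L + 1)"
proof -
  define I where "I = {p. prime p \<and> 5 \<le> p \<and> K < p \<and> p \<le> L}"
  have I_sub: "I \<subseteq> {..L}" by (auto simp: I_def)
  then have fin: "finite I" by (rule finite_subset) simp
  have "(\<Sum>p\<in>I. real (card {n\<in>B. p^2 dvd n}))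
      \<le> x / 36 * (\<Sum>p\<in>I. 1 / (real p)^2) + 1 * real (card I)"
    using assms(1) B fin card_prime_square_class
    by (intro sum_bounded_by_inverse_squares) (auto simp: I_def)
  also have "\<dots> \<le> x / 36 * (1 / real K) + (real L + 1)"
  proof (intro add_mono mult_left_mono)
    show "(\<Sum>p\<in>I. 1 / (real p)^2) \<le> 1 / real K"
      using assms(2) fin by (intro sum_inverse_squares_tail) (auto simp: I_def)
    show "1 * real (card I) \<le> real L + 1" using card_atMost_subset_le[OF I_sub] by simp
  qed (use assms(1) in simp)
  finally show ?thesis by (simp add: I_def)
qed

text \<open>Counting a covered class: n with p \<le> K lies in one of the classes modulo 36 p^2 q^2,
  n with p > K in one of the classes modulo 36 p^2.\<close>

lemma card_covered_class:
  fixes B :: "nat set" and K L a :: nat and mp :: "nat \<Rightarrow> nat" and x :: real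
  assumes "x \<ge> 0" and "1 \<le> K" and B: "\<forall>n\<in>B. real n \<le> x \<and> n mod 36 = a"
    and cover: "\<forall>n\<in>B. prime_square_cover L mp n"
  shows "real (card B) \<le> x / 2304 + x / (36 * real K) + (real K + 2) * (real L + 1)"
proof -
  define I1 where "I1 = {p. prime p \<and> 5 \<le> p \<and> p \<le> K}"
  define I2 where "I2 p = {q. prime q \<and> 5 \<le> q \<and> q \<le> L \<and> q \<noteq> p}" for p
  define I3 where "I3 = {p. prime p \<and> 5 \<le> p \<and> K < p \<and> p \<le> L}"
  define C where "C p q = {n\<in>B. p^2 dvd n \<and> q^2 dvd n + mp p}" for p q
  define E where "E p = {n\<in>B. p^2 dvd n}" for p
  have fin: "finite I1" "finite (I2 p)" "finite I3" for p
    by (auto simp: I1_def I2_def I3_def intro: finite_subset[of _ "{..max K L}"])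
  let ?U = "(\<Union>p\<in>I1. \<Union>q\<in>I2 p. C p q) \<union> (\<Union>p\<in>I3. E p)"
  have "B \<subseteq> ?U"
  proof
    fix n assume "n \<in> B"
    then obtain p q where "prime p" "5 \<le> p" "p \<le> L" "p^2 dvd n"
        "prime q" "5 \<le> q" "q \<le> L" "q \<noteq> p" "q^2 dvd n + mp p"
      using cover unfolding prime_square_cover_def by blast
    with \<open>n \<in> B\<close> show "n \<in> ?U"
      by (cases "p \<le> K") (auto simp: I1_def I2_def I3_def C_def E_def)
  qed
  moreover have "?U \<subseteq> B" by (auto simp: C_def E_def)
  ultimately have "card B = card ?U" by (metis subset_antisym)
  also have "\<dots> \<le> card (\<Union>p\<in>I1. \<Union>q\<in>I2 p. C p q) + card (\<Union>p\<in>I3. E p)"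
    by (rule card_Un_le)
  also have "\<dots> \<le> (\<Sum>p\<in>I1. \<Sum>q\<in>I2 p. card (C p q)) + (\<Sum>p\<in>I3. card (E p))"
    by (intro add_mono order_trans[OF card_UN_le] sum_mono card_UN_le) (simp_all add: fin)
  finally have "real (card B) \<le>
      real ((\<Sum>p\<in>I1. \<Sum>q\<in>I2 p. card (C p q)) + (\<Sum>p\<in>I3. card (E p)))"
    by (rule of_nat_mono)
  also have "\<dots> \<le> (x / 2304 + (real K + 1) * (real L + 1)) + (x / (36 * real K) + (real L + 1))"
    using sum_two_prime_square_classes[where K = K and L = L and mp = mp, OF assms(1) B]
      sum_prime_square_classes_tail[where L = L, OF assms(1,2) B]
    by (simp add: of_nat_sum I1_def I2_def I3_def C_def E_def)
  finally show ?thesis by (simp add: algebra_simps)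
qed

section \<open>The density bound\<close>

text \<open>The class count is at most the larger of the two case bounds: either one prime square
  divides every element, or witnesses m_p exist and the covering argument applies.\<close>

lemma class_count_bound:
  fixes A :: "nat set" and a K :: nat and x \<epsilon> :: real
  assumes "standing \<epsilon> x A" and "(2 * a) mod 36 \<notin> Qres" and "x \<ge> 0" and "1 \<le> K"
  shows "real (card {n\<in>A. n mod 36 = a})
    \<le> max (x / 900 + 1) (x / 2304 + x / (36 * real K) + (real K + 2) * (sqrt (2 * x) + 1))"
proof -
  define B where "B = {n\<in>A. n mod 36 = a}"
  have Bx: "\<forall>n\<in>B. 1 \<le> n \<and> real n \<le> x \<and> n mod 36 = a"
    using assms(1) by (auto simp: standing_def B_def)
  have sums: "large_prime_square_sums B"
    using standing_class_large_prime_square_sums[OF assms(1,2)] by (simp add: B_def)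
  show ?thesis
  proof (cases "\<exists>p. prime p \<and> 5 \<le> p \<and> (\<forall>n\<in>B. p^2 dvd n)")
    case True
    then obtain p where p: "prime p" "5 \<le> p" "\<forall>n\<in>B. p^2 dvd n" by blast
    have "{n\<in>B. p^2 dvd n} = B" using p(3) by auto
    then have "real (card B) \<le> x / 36 / (real p)^2 + 1"
      using card_prime_square_class[OF p(1,2) assms(3), of B a] Bx by simp
    also have "x / 36 / (real p)^2 \<le> x / 36 / 25"
      using p(2) assms(3) power_mono[of 5 "real p" 2] by (intro divide_left_mono) auto
    finally show ?thesis by (simp add: B_def)
  next
    case False
    then obtain mp where mp: "\<And>p. prime p \<Longrightarrow> 5 \<le> p \<Longrightarrow> mp p \<in> B \<and> \<not> p^2 dvd mp p"
      by metis
    have "real (card B)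
        \<le> x / 2304 + x / (36 * real K) + (real K + 2) * (real (nat \<lfloor>sqrt (2 * x)\<rfloor>) + 1)"
      using assms(3,4) Bx class_cover_by_prime_squares[OF sums _ mp, of x]
      by (intro card_covered_class) auto
    also have "\<dots> \<le> x / 2304 + x / (36 * real K) + (real K + 2) * (sqrt (2 * x) + 1)"
    proof -
      have "real (nat \<lfloor>sqrt (2 * x)\<rfloor>) \<le> sqrt (2 * x)" using assms(3) by simp
      then have "(real K + 2) * (real (nat \<lfloor>sqrt (2 * x)\<rfloor>) + 1)
          \<le> (real K + 2) * (sqrt (2 * x) + 1)" by (intro mult_left_mono) auto
      then show ?thesis by linarith
    qed
    finally show ?thesis by (simp add: B_def)
  qed
qed

lemma sqrt_error_le:
  fixes c \<eta> x :: real
  assumes "0 \<le> c" and "0 < \<eta>" and "1 \<le> x" and "(c / \<eta>)^2 \<le> x"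
  shows "c * (sqrt (2 * x) + 1) \<le> 3 * \<eta> * x"
proof -
  have "sqrt 2 \<le> 2" by (rule real_le_lsqrt) auto
  then have "sqrt 2 * sqrt x \<le> 2 * sqrt x" by (rule mult_right_mono) (use assms(3) in simp)
  moreover have "1 \<le> sqrt x" using assms(3) by simp
  moreover have "sqrt (2 * x) = sqrt 2 * sqrt x" by (rule real_sqrt_mult)
  ultimately have "sqrt (2 * x) + 1 \<le> 3 * sqrt x" by linarith
  moreover have "c \<le> \<eta> * sqrt x"
    using real_le_rsqrt[OF assms(4)] assms(2) by (simp add: field_simps)
  moreover have "0 \<le> sqrt (2 * x)" using assms(3) by simp
  ultimately have "c * (sqrt (2 * x) + 1) \<le> \<eta> * sqrt x * (3 * sqrt x)"
    using assms(1) by (intro mult_mono) auto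
  also have "\<dots> = 3 * \<eta> * x" using assms(3) by simp
  finally show ?thesis .
qed

lemma nat_ceiling_reciprocal:
  fixes t :: real
  assumes "0 < t"
  shows "1 \<le> nat \<lceil>1 / t\<rceil>" and "1 / real (nat \<lceil>1 / t\<rceil>) \<le> t"
proof -
  have ge: "1 / t \<le> real (nat \<lceil>1 / t\<rceil>)" by (rule real_nat_ceiling_ge)
  have pos: "0 < 1 / t" using assms by simp
  then show "1 \<le> nat \<lceil>1 / t\<rceil>" using ge by linarith
  have "1 / real (nat \<lceil>1 / t\<rceil>) \<le> 1 / (1 / t)" using pos ge by (intro frac_le) auto
  then show "1 / real (nat \<lceil>1 / t\<rceil>) \<le> t" by simp
qed

theorem lemma5:
  fixes \<epsilon> \<eta> :: real
  assumes "\<epsilon> > 0" and "\<eta> > 0"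
  shows "\<exists>X. \<forall>x\<ge>X. \<forall>A. standing \<epsilon> x A \<longrightarrow>
           (\<forall>a<36. (2 * a) mod 36 \<notin> Qres \<longrightarrow> delta_res A x a \<le> 0.04 + \<eta>)"
proof -
  define K where "K = nat \<lceil>1 / (\<eta> / 2)\<rceil>"
  have K: "1 \<le> K" "1 / real K \<le> \<eta> / 2"
    using nat_ceiling_reciprocal[of "\<eta> / 2"] assms(2) by (simp_all add: K_def)
  define X where "X = max 1 (max (36 / \<eta>) (((real K + 2) / (\<eta> / 216))^2))"
  show ?thesis
  proof (intro exI[of _ X] allI impI)
    fix x A a
    assume "X \<le> x" and st: "standing \<epsilon> x A" and "a < 36" and a: "(2 * a) mod 36 \<notin> Qres"
    then have x: "1 \<le> x" "36 / \<eta> \<le> x" "((real K + 2) / (\<eta> / 216))^2 \<le> x"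
      by (auto simp: X_def)
    have "1 \<le> \<eta> * x / 36" using x(2) assms(2) by (simp add: field_simps)
    then have common_square: "x / 900 + 1 \<le> x / 900 + \<eta> * x / 36" by linarith
    have "(real K + 2) * (sqrt (2 * x) + 1) \<le> \<eta> * x / 72"
      using sqrt_error_le[OF _ _ x(1) x(3)] assms(2) by simp
    moreover have "x / (36 * real K) \<le> \<eta> * x / 72"
      using mult_left_mono[OF K(2), of "x / 36"] x(1) by (simp add: mult.commute)
    ultimately have covered: "x / 2304 + x / (36 * real K) + (real K + 2) * (sqrt (2 * x) + 1)
        \<le> x / 900 + \<eta> * x / 36"
      using x(1) by linarith
    have "real (card {n\<in>A. n mod 36 = a}) \<le> x / 900 + \<eta> * x / 36"
      using class_count_bound[OF st a _ K(1)] x(1) common_square covered by simp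
    then show "delta_res A x a \<le> 0.04 + \<eta>"
      using x(1) by (simp add: delta_res_def field_simps)
  qed
qed

end
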